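(* For $k=2$, $\Theta_2$ equals the support of $\nu_2$.
   Context: Take $k=2$. For a permutation $\tau$ of $\{0,1,2\}$ and $c=(c_1,c_2)\in(0,\infty)^2$: $E_{\tau,i}=\{j\in\{1,2\}:\min(\tau(j-1),\tau(j))<i\le\max(\tau(j-1),\tau(j))\}$, $F_{\tau,i}(c)=\sum_{j\in E_{\tau,i}}\sqrt{2c_j}$, $F_\tau=(F_{\tau,1},F_{\tau,2})$, $w_\tau(c)=\frac14\prod_{i=1}^2\sqrt{2c_i}/F_{\tau,i}(c)$. Explicitly, writing $s_i=\sqrt{2c_i}$: $F_{(0,1,2)}=(s_1,s_2)$, $w=1/4$; $F_{(0,2,1)}=(s_1,s_1+s_2)$, $w=\frac14 s_2/(s_1+s_2)$; $F_{(1,0,2)}=(s_1+s_2,s_2)$, $w=\frac14 s_1/(s_1+s_2)$; $F_{(1,2,0)}=(s_2,s_1+s_2)$, $w=\frac14 s_1/(s_1+s_2)$; $F_{(2,0,1)}=(s_1+s_2,s_1)$, $w=\frac14 s_2/(s_1+s_2)$; $F_{(2,1,0)}=(s_2,s_1)$, $w=1/4$ (here $\tau$ is written as $(\tau(0),\tau(1),\tau(2))$). $Q$ is the Markov kernel $Q(c,\cdot)=\sum_\tau w_\tau(c)\delta_{F_\tau(c)}$. For any probability $\nu^{(0)}$ supported in $[2,8]^2$, $\nu^{(0)}Q^n$ converges weakly to a probability $\nu_2$ independent of $\nu^{(0)}$. Let $\Theta^{(0)}=[2,8]^2$, $\Theta^{(n)}=\bigcup_\tau F_\tau(\Theta^{(n-1)})$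 (a nonincreasing sequence of nonempty compact sets), and $\Theta_2=\bigcap_n\Theta^{(n)}$. *)

theory Defs
  imports "HOL-Probability.Probability"
begin

definition coord :: "real \<times> real \<Rightarrow> nat \<Rightarrow> real" where
  "coord c j = (if j = 1 then fst c else snd c)"

definition perms3 :: "(nat \<Rightarrow> nat) set" where
  "perms3 = {\<tau>. \<tau> permutes {0,1,2}}"

definition E_set :: "(nat \<Rightarrow> nat) \<Rightarrow> nat \<Rightarrow> nat set" where
  "E_set \<tau> i = {j \<in> {1,2}. min (\<tau> (j-1)) (\<tau> j) < i \<and> i \<le> max (\<tau> (j-1)) (\<tau> j)}"

definition F_comp :: "(nat \<Rightarrow> nat) \<Rightarrow> nat \<Rightarrow> real \<times> real \<Rightarrow> real" where
  "F_comp \<tau> i c = (\<Sum>j\<in>E_set \<tau> i. sqrt (2 * coord c j))"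

definition F_map :: "(nat \<Rightarrow> nat) \<Rightarrow> real \<times> real \<Rightarrow> real \<times> real" where
  "F_map \<tau> c = (F_comp \<tau> 1 c, F_comp \<tau> 2 c)"

definition w_weight :: "(nat \<Rightarrow> nat) \<Rightarrow> real \<times> real \<Rightarrow> real" where
  "w_weight \<tau> c = 1/4 * (\<Prod>i\<in>{1,2}. sqrt (2 * coord c i) / F_comp \<tau> i c)"

text \<open>The action nu \<mapsto> nu Q of the Markov kernel
  Q(c,.) = sum_tau w_tau(c) delta_{F_tau(c)} on Borel measures on R^2.\<close>
definition Qstep :: "(real \<times> real) measure \<Rightarrow> (real \<times> real) measure" where
  "Qstep \<nu> = measure_of UNIV (sets borel)
     (\<lambda>A. \<integral>\<^sup>+ c. (\<Sum>\<tau>\<in>perms3. ennreal (w_weight \<tau> c) * indicator A (F_map \<tau> c)) \<partial>\<nu>)"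

definition weak_conv2 :: "(nat \<Rightarrow> (real \<times> real) measure) \<Rightarrow> (real \<times> real) measure \<Rightarrow> bool" where
  "weak_conv2 \<mu>s \<mu> \<longleftrightarrow>
     (\<forall>f :: real \<times> real \<Rightarrow> real. continuous_on UNIV f \<and> bounded (range f) \<longrightarrow>
        (\<lambda>n. \<integral>x. f x \<partial>(\<mu>s n)) \<longlonglongrightarrow> (\<integral>x. f x \<partial>\<mu>))"

definition msupport :: "(real \<times> real) measure \<Rightarrow> (real \<times> real) set" where
  "msupport \<mu> = {x. \<forall>U. open U \<and> x \<in> U \<longrightarrow> emeasure \<mu> U > 0}"

fun Theta :: "nat \<Rightarrow> (real \<times> real) set" where
  "Theta 0 = {2..8} \<times> {2..8}"
| "Theta (Suc n) = (\<Union>\<tau>\<in>perms3. F_map \<tau> ` Theta n)"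

definition Theta2 :: "(real \<times> real) set" where
  "Theta2 = (\<Inter>n. Theta n)"

end

theory Submission
  imports Defs
begin

text \<open>
  Start the chain at the Dirac mass at (2,2). Its n-th iterate is a probability measure carried
  by Theta n, so a tent function centred outside some Theta m eventually integrates to 0, and by
  weak convergence nu2 gives no mass near that centre. Conversely, every F_tau maps [2,8]^2 into
  itself with weight at least 1/64 there; since c |-> sqrt(2c) is 1/2-Lipschitz on [2,oo) and no
  tau puts a sum into both components, any two consecutive maps contract the max-distance by 3/4.
  So each point of Theta2 is close to the whole image of [2,8]^2 under some word w of maps, and
  that image has iterate mass at least 64^-|w|; a tent function carries this bound over to nu2.
\<close>

text \<open>
  A permutation of {0,1,2} is determined by its values at 0, 1, 2, so facts about all
  \<open>\<tau> \<in> perms3\<close> reduce to a check of the six triples below.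
\<close>
definition perm_triple :: "(nat \<Rightarrow> nat) \<Rightarrow> nat \<times> nat \<times> nat" where
  "perm_triple \<tau> = (\<tau> 0, \<tau> 1, \<tau> 2)"

definition perm_triples :: "(nat \<times> nat \<times> nat) set" where
  "perm_triples = {(0,1,2), (0,2,1), (1,0,2), (1,2,0), (2,0,1), (2,1,0)}"

lemma finite_perms3: "finite perms3"
  unfolding perms3_def by (rule finite_permutations) simp

lemma card_perms3: "card perms3 = 6"
  unfolding perms3_def using card_permutations[of "{0::nat,1,2}" 3] by (simp add: fact_numeral)

lemma inj_on_perm_triple: "inj_on perm_triple perms3"
proof
  fix \<sigma> \<tau> assume "\<sigma> \<in> perms3" "\<tau> \<in> perms3" and eq: "perm_triple \<sigma> = perm_triple \<tau>"
  then have "\<sigma> permutes {0,1,2}" "\<tau> permutes {0,1,2}" by (simp_all add: perms3_def)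
  show "\<sigma> = \<tau>"
  proof
    fix x
    show "\<sigma> x = \<tau> x"
      using eq \<open>\<sigma> permutes _\<close> \<open>\<tau> permutes _\<close>
      by (cases "x \<in> {0,1,2}") (auto simp: perm_triple_def permutes_not_in)
  qed
qed

lemma distinct_triple_in_perm_triples:
  "x \<in> {0,1,2} \<Longrightarrow> y \<in> {0,1,2} \<Longrightarrow> z \<in> {0,1,2} \<Longrightarrow> x \<noteq> y \<Longrightarrow> x \<noteq> z \<Longrightarrow> y \<noteq> z \<Longrightarrow>
    (x, y, z) \<in> perm_triples"
  unfolding perm_triples_def by (elim insertE emptyE; simp)

lemma perm_triple_in_perm_triples:
  assumes "\<tau> \<in> perms3" shows "perm_triple \<tau> \<in> perm_triples"
proof -
  have p: "\<tau> permutes {0,1,2}" using assms by (simp add: perms3_def)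
  have "\<tau> 0 \<in> {0,1,2}" "\<tau> 1 \<in> {0,1,2}" "\<tau> 2 \<in> {0,1,2}"
    by (simp_all only: permutes_in_image[OF p]) simp_all
  moreover have "\<tau> 0 \<noteq> \<tau> 1" "\<tau> 0 \<noteq> \<tau> 2" "\<tau> 1 \<noteq> \<tau> 2"
    by (simp_all add: inj_eq[OF permutes_inj[OF p]])
  ultimately show ?thesis unfolding perm_triple_def by (rule distinct_triple_in_perm_triples)
qed

lemma perm_triple_image: "perm_triple ` perms3 = perm_triples"
proof (rule card_subset_eq)
  show "finite perm_triples" by (simp add: perm_triples_def)
  show "perm_triple ` perms3 \<subseteq> perm_triples" using perm_triple_in_perm_triples by blast
  show "card (perm_triple ` perms3) = card perm_triples"
    using card_image[OF inj_on_perm_triple] by (simp add: card_perms3 perm_triples_def)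
qed

lemma sum_perms3: "(\<Sum>\<tau>\<in>perms3. f (perm_triple \<tau>)) = (\<Sum>t\<in>perm_triples. f t)"
  using sum.reindex[OF inj_on_perm_triple, of f] by (simp add: perm_triple_image)

definition E_triple :: "nat \<times> nat \<times> nat \<Rightarrow> nat \<Rightarrow> nat set" where
  "E_triple t i = (case t of (a, b, c) \<Rightarrow>
     (if min a b < i \<and> i \<le> max a b then {1} else {}) \<union>
     (if min b c < i \<and> i \<le> max b c then {2} else {}))"

lemma E_set_eq_E_triple: "E_set \<tau> i = E_triple (perm_triple \<tau>) i"
  unfolding E_set_def E_triple_def perm_triple_def by auto

lemma E_triple_perm_triples:
  "t \<in> perm_triples \<Longrightarrow> (E_triple t 1, E_triple t 2) \<in>
    {({1}, {2}), ({1}, {1,2}), ({1,2}, {2}), ({2}, {1,2}), ({1,2}, {1}), ({2}, {1})}"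
  unfolding perm_triples_def by (elim insertE emptyE) (simp_all add: E_triple_def)

lemma E_set_cases:
  assumes "\<tau> \<in> perms3" "i \<in> {1,2}" shows "E_set \<tau> i \<in> {{1}, {2}, {1,2}}"
  using E_triple_perm_triples[OF perm_triple_in_perm_triples[OF assms(1)]] assms(2)
  unfolding E_set_eq_E_triple by (elim insertE emptyE) simp_all

lemma E_set_not_both:
  assumes "\<tau> \<in> perms3" shows "E_set \<tau> 1 \<noteq> {1,2} \<or> E_set \<tau> 2 \<noteq> {1,2}"
  using E_triple_perm_triples[OF perm_triple_in_perm_triples[OF assms]]
  unfolding E_set_eq_E_triple by (elim insertE emptyE) simp_all

lemma coord_simps [simp]: "coord c 1 = fst c" "coord c (Suc 0) = fst c" "coord c 2 = snd c"
  by (simp_all add: coord_def)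

lemma sum_w_weight:
  assumes "0 < fst c" "0 < snd c"
  shows "(\<Sum>\<tau>\<in>perms3. w_weight \<tau> c) = 1"
proof -
  define a where "a = sqrt (2 * fst c)"
  define b where "b = sqrt (2 * snd c)"
  have "0 < a" "0 < b" using assms by (simp_all add: a_def b_def)
  have "(\<Sum>\<tau>\<in>perms3. w_weight \<tau> c) = (\<Sum>t\<in>perm_triples.
      1/4 * (\<Prod>i\<in>{1,2}. sqrt (2 * coord c i) / (\<Sum>j\<in>E_triple t i. sqrt (2 * coord c j))))"
    unfolding w_weight_def F_comp_def E_set_eq_E_triple by (rule sum_perms3)
  also have "\<dots> = 1"
    using \<open>0 < a\<close> \<open>0 < b\<close>
    by (simp add: perm_triples_def E_triple_def flip: a_def b_def)
       (simp add: field_simps add_pos_pos less_imp_neq[symmetric])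
  finally show ?thesis .
qed

definition root2 :: "real \<Rightarrow> real" where
  "root2 x = sqrt (2 * x)"

abbreviation square28 :: "(real \<times> real) set" where
  "square28 \<equiv> {2..8} \<times> {2..8}"

lemma F_comp_cases:
  assumes "\<tau> \<in> perms3" "i \<in> {1,2}"
  shows "F_comp \<tau> i c \<in> {root2 (fst c), root2 (snd c), root2 (fst c) + root2 (snd c)}"
proof -
  have "E_set \<tau> i = {1} \<or> E_set \<tau> i = {2} \<or> E_set \<tau> i = {1,2}"
    using E_set_cases[OF assms] by simp
  then show ?thesis unfolding F_comp_def root2_def by (elim disjE) simp_all
qed

lemma root2_bounds:
  assumes "2 \<le> x" "x \<le> 8" shows "2 \<le> root2 x" "root2 x \<le> 4"
  unfolding root2_def using assms by (auto intro: real_le_rsqrt real_le_lsqrt)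

lemma root2_lipschitz:
  assumes "2 \<le> x" "2 \<le> y" shows "\<bar>root2 x - root2 y\<bar> \<le> \<bar>x - y\<bar> / 2"
proof -
  have "2 \<le> root2 x" "2 \<le> root2 y"
    unfolding root2_def using assms by (auto intro: real_le_rsqrt)
  then have pos: "0 \<le> root2 x + root2 y" "4 \<le> root2 x + root2 y" by simp_all
  have "\<bar>root2 x - root2 y\<bar> * 4 \<le> \<bar>root2 x - root2 y\<bar> * (root2 x + root2 y)"
    using pos by (intro mult_left_mono) auto
  also have "\<dots> = \<bar>(root2 x - root2 y) * (root2 x + root2 y)\<bar>"
    using pos by (simp add: abs_mult)
  also have "\<dots> = \<bar>2 * (x - y)\<bar>"
    using assms by (simp add: root2_def algebra_simps)
  also have "\<dots> = 2 * \<bar>x - y\<bar>"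
    by (simp only: abs_mult)
  finally show ?thesis by simp
qed

lemma F_comp_bounds:
  assumes "\<tau> \<in> perms3" "i \<in> {1,2}" "c \<in> square28"
  shows "2 \<le> F_comp \<tau> i c" "F_comp \<tau> i c \<le> 8"
  using F_comp_cases[OF assms(1,2), of c] root2_bounds[of "fst c"] root2_bounds[of "snd c"] assms(3)
  by (auto simp: mem_Times_iff)

lemma F_map_in_square28: "\<tau> \<in> perms3 \<Longrightarrow> c \<in> square28 \<Longrightarrow> F_map \<tau> c \<in> square28"
  using F_comp_bounds[of \<tau> 1 c] F_comp_bounds[of \<tau> 2 c] by (simp add: F_map_def)

lemma w_weight_ge:
  assumes "\<tau> \<in> perms3" "c \<in> square28" shows "1/64 \<le> w_weight \<tau> c"
proof -
  have factor: "1/4 \<le> sqrt (2 * coord c i) / F_comp \<tau> i c" if "i \<in> {1,2}" for i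
  proof -
    have "2 \<le> sqrt (2 * coord c i)"
      using that root2_bounds[of "fst c"] root2_bounds[of "snd c"] assms(2)
      by (auto simp: root2_def mem_Times_iff)
    then show ?thesis using F_comp_bounds[OF assms(1) that assms(2)] by (simp add: field_simps)
  qed
  have f1: "1/4 \<le> sqrt (2 * coord c 1) / F_comp \<tau> 1 c"
    and f2: "1/4 \<le> sqrt (2 * coord c 2) / F_comp \<tau> 2 c"
    using factor[of 1] factor[of 2] by simp_all
  have "1/4 * (1/4) \<le> sqrt (2 * coord c 1) / F_comp \<tau> 1 c * (sqrt (2 * coord c 2) / F_comp \<tau> 2 c)"
    by (rule mult_mono[OF f1 f2]) (use f1 in linarith)+
  then show ?thesis unfolding w_weight_def by (simp add: mult_ac)
qed

definition dist_max :: "real \<times> real \<Rightarrow> real \<times> real \<Rightarrow> real" where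
  "dist_max a b = max \<bar>fst a - fst b\<bar> \<bar>snd a - snd b\<bar>"

definition dist_l1 :: "real \<times> real \<Rightarrow> real \<times> real \<Rightarrow> real" where
  "dist_l1 a b = \<bar>fst a - fst b\<bar> + \<bar>snd a - snd b\<bar>"

lemma dist_l1_le_dist_max: "dist_l1 a b \<le> 2 * dist_max a b"
  by (simp add: dist_l1_def dist_max_def max_def)

lemma dist_max_nonneg: "0 \<le> dist_max a b"
  by (simp add: dist_max_def)

lemma dist_max_le_dist_l1: "dist_max a b \<le> dist_l1 a b"
  by (simp add: dist_l1_def dist_max_def)

lemma dist_le_dist_l1: "dist a b \<le> dist_l1 a b"
  unfolding dist_prod_def dist_l1_def dist_real_def
  using sqrt_sum_squares_le_sum_abs[of "fst a - fst b" "snd a - snd b"] by simp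

lemma F_comp_dist_le:
  assumes "\<tau> \<in> perms3" "i \<in> {1,2}" "a \<in> square28" "b \<in> square28"
  shows "\<bar>F_comp \<tau> i a - F_comp \<tau> i b\<bar> \<le>
    (if E_set \<tau> i = {1,2} then dist_l1 a b / 2 else dist_max a b / 2)"
proof -
  have 1: "\<bar>root2 (fst a) - root2 (fst b)\<bar> \<le> \<bar>fst a - fst b\<bar> / 2"
    and 2: "\<bar>root2 (snd a) - root2 (snd b)\<bar> \<le> \<bar>snd a - snd b\<bar> / 2"
    by (rule root2_lipschitz; use assms(3,4) in \<open>simp add: mem_Times_iff\<close>)+
  have "E_set \<tau> i = {1} \<or> E_set \<tau> i = {2} \<or> E_set \<tau> i = {1,2}"
    using E_set_cases[OF assms(1,2)] by simp
  then show ?thesis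
  proof (elim disjE)
    assume "E_set \<tau> i = {1}"
    then show ?thesis using 1 by (simp add: F_comp_def dist_max_def root2_def)
  next
    assume "E_set \<tau> i = {2}"
    then show ?thesis using 2 by (simp add: F_comp_def dist_max_def root2_def)
  next
    assume E: "E_set \<tau> i = {1,2}"
    then have "F_comp \<tau> i a - F_comp \<tau> i b = (root2 (fst a) - root2 (fst b)) + (root2 (snd a) - root2 (snd b))"
      by (simp add: F_comp_def root2_def)
    then show ?thesis
      using E 1 2 abs_triangle_ineq[of "root2 (fst a) - root2 (fst b)" "root2 (snd a) - root2 (snd b)"]
      by (simp add: dist_l1_def)
  qed
qed

lemma dist_max_F_map_le:
  assumes "\<tau> \<in> perms3" "a \<in> square28" "b \<in> square28"
  shows "dist_max (F_map \<tau> a) (F_map \<tau> b) \<le> dist_l1 a b / 2"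
proof -
  have "\<bar>F_comp \<tau> i a - F_comp \<tau> i b\<bar> \<le> dist_l1 a b / 2" if "i \<in> {1,2}" for i
    using F_comp_dist_le[OF assms(1) that assms(2,3)] dist_max_le_dist_l1[of a b]
    by (simp split: if_splits)
  from this[of 1] this[of 2] show ?thesis by (simp add: dist_max_def F_map_def)
qed

lemma dist_l1_F_map_le:
  assumes "\<tau> \<in> perms3" "a \<in> square28" "b \<in> square28"
  shows "dist_l1 (F_map \<tau> a) (F_map \<tau> b) \<le> 3/2 * dist_max a b"
proof -
  let ?d = "\<lambda>i. \<bar>F_comp \<tau> i a - F_comp \<tau> i b\<bar>"
  have d: "?d i \<le> (if E_set \<tau> i = {1,2} then dist_max a b else dist_max a b / 2)" if "i \<in> {1,2}" for i
    using F_comp_dist_le[OF assms(1) that assms(2,3)] dist_l1_le_dist_max[of a b]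
    by (simp split: if_splits)
  have "?d 1 + ?d 2 \<le> 3/2 * dist_max a b"
    using E_set_not_both[OF assms(1)]
  proof
    assume "E_set \<tau> 1 \<noteq> {1,2}"
    then show ?thesis using d[of 1] d[of 2] dist_max_nonneg[of a b] by (simp split: if_splits)
  next
    assume "E_set \<tau> 2 \<noteq> {1,2}"
    then show ?thesis using d[of 1] d[of 2] dist_max_nonneg[of a b] by (simp split: if_splits)
  qed
  then show ?thesis by (simp add: dist_l1_def F_map_def)
qed

text \<open>
  A single step need not contract \<open>dist_max\<close>, as a component may be \<open>s\<^sub>1 + s\<^sub>2\<close>;
  but at most one component is such a sum, so one step costs at most a factor 3/2 in
  \<open>dist_l1\<close>, which the next step halves.
\<close>
lemma dist_max_F_map2_le:
  assumes "\<tau> \<in> perms3" "\<sigma> \<in> perms3" "a \<in> square28" "b \<in> square28"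
  shows "dist_max (F_map \<sigma> (F_map \<tau> a)) (F_map \<sigma> (F_map \<tau> b)) \<le> 3/4 * dist_max a b"
  using dist_max_F_map_le[OF assms(2) F_map_in_square28[OF assms(1,3)] F_map_in_square28[OF assms(1,4)]]
    dist_l1_F_map_le[OF assms(1,3,4)]
  by linarith

lemma foldr_F_map_in_square28: "set w \<subseteq> perms3 \<Longrightarrow> c \<in> square28 \<Longrightarrow> foldr F_map w c \<in> square28"
  by (induction w) (auto intro: F_map_in_square28)

lemma dist_max_foldr_F_map_le:
  "set w \<subseteq> perms3 \<Longrightarrow> a \<in> square28 \<Longrightarrow> b \<in> square28 \<Longrightarrow>
    dist_max (foldr F_map w a) (foldr F_map w b) \<le> (3/4) ^ (length w div 2) * dist_max a b"
proof (induction w rule: induct_list012)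
  case 1 then show ?case by simp
next
  case (2 \<tau>) then show ?case
    using dist_max_F_map_le[of \<tau> a b] dist_l1_le_dist_max[of a b] by simp
next
  case (3 \<sigma> \<tau> w)
  have "dist_max (foldr F_map (\<sigma> # \<tau> # w) a) (foldr F_map (\<sigma> # \<tau> # w) b)
      \<le> 3/4 * dist_max (foldr F_map w a) (foldr F_map w b)"
    using 3(3-5) dist_max_F_map2_le[of \<tau> \<sigma>] foldr_F_map_in_square28[of w] by simp
  also have "\<dots> \<le> 3/4 * ((3/4) ^ (length w div 2) * dist_max a b)"
    using 3 by (intro mult_left_mono) auto
  finally show ?case by simp
qed

lemma continuous_on_coord: "continuous_on UNIV (\<lambda>c. coord c j)"
  by (cases "j = 1") (simp_all add: coord_def continuous_intros)

lemma continuous_on_F_map: "continuous_on UNIV (F_map \<tau>)"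
proof -
  have "continuous_on UNIV (F_comp \<tau> i)" for i
    unfolding F_comp_def
    by (intro continuous_on_sum continuous_on_compose2[OF continuous_on_real_sqrt]
        continuous_on_mult[OF continuous_on_const continuous_on_coord]) auto
  then show ?thesis unfolding F_map_def by (intro continuous_on_Pair)
qed

lemma continuous_on_foldr_F_map: "continuous_on UNIV (foldr F_map w)"
  by (induction w) (auto intro: continuous_on_compose2[OF continuous_on_F_map])

lemma compact_Theta: "compact (Theta n)"
  by (induction n)
     (auto simp: compact_Times finite_perms3
           intro!: compact_UN compact_continuous_image continuous_on_subset[OF continuous_on_F_map])

lemma Theta_Suc_subset: "Theta (Suc n) \<subseteq> Theta n"
proof (induction n)
  case 0
  show ?case using F_map_in_square28 by (simp only: Theta.simps) blast
next
  case (Suc n)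
  then show ?case by (simp only: Theta.simps) blast
qed

lemma Theta_antimono: "m \<le> n \<Longrightarrow> Theta n \<subseteq> Theta m"
  using Theta_Suc_subset by (rule decseqD[OF decseq_SucI])

lemma Theta_subset_square28: "Theta n \<subseteq> square28"
  using Theta_antimono[of 0 n] by simp

lemma Theta_in_word_image:
  "x \<in> Theta n \<Longrightarrow> \<exists>w y. set w \<subseteq> perms3 \<and> length w = n \<and> y \<in> square28 \<and> x = foldr F_map w y"
proof (induction n arbitrary: x)
  case (Suc n)
  then obtain \<tau> z where \<tau>: "\<tau> \<in> perms3" and "z \<in> Theta n" "x = F_map \<tau> z" by auto
  with Suc.IH obtain w y where "set w \<subseteq> perms3" "length w = n" "y \<in> square28" "x = F_map \<tau> (foldr F_map w y)"
    by blast
  with \<tau> show ?case by (intro exI[of _ "\<tau> # w"] exI[of _ y]) simp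
qed auto

lemma Theta2_near_word_image:
  assumes "x \<in> Theta2" "e > 0"
  obtains w where "set w \<subseteq> perms3" "foldr F_map w ` square28 \<subseteq> cball x e"
proof -
  obtain N where N: "(3/4::real) ^ N < e / 12"
    using real_arch_pow_inv[of "e/12" "3/4"] \<open>e > 0\<close> by auto
  have "x \<in> Theta (2 * N)" using assms(1) by (simp add: Theta2_def)
  then obtain w y where w: "set w \<subseteq> perms3" "length w = 2 * N" "y \<in> square28"
    and x: "x = foldr F_map w y"
    using Theta_in_word_image by blast
  have "dist x z \<le> e" if z: "z \<in> foldr F_map w ` square28" for z
  proof -
    obtain a where a: "a \<in> square28" "z = foldr F_map w a" using z by blast
    have "dist x z \<le> 2 * dist_max (foldr F_map w y) (foldr F_map w a)"
      using dist_le_dist_l1 dist_l1_le_dist_max x a(2) by (metis order_trans)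
    also have "\<dots> \<le> 2 * ((3/4) ^ N * dist_max y a)"
      using dist_max_foldr_F_map_le[OF w(1,3) a(1)] w(2) by simp
    also have "\<dots> \<le> 2 * ((3/4) ^ N * 6)"
      using w(3) a(1) by (intro mult_left_mono) (auto simp: dist_max_def mem_Times_iff)
    also have "\<dots> \<le> e" using N by simp
    finally show ?thesis .
  qed
  then have "foldr F_map w ` square28 \<subseteq> cball x e" by (simp add: subset_iff)
  with that w(1) show ?thesis by blast
qed

lemma F_map_measurable [measurable]: "F_map \<tau> \<in> borel_measurable borel"
  using continuous_on_F_map by (rule borel_measurable_continuous_onI)

lemma w_weight_measurable [measurable]: "w_weight \<tau> \<in> borel_measurable borel"
proof -
  have [measurable]: "(\<lambda>c. coord c j) \<in> borel_measurable borel" for j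
    using continuous_on_coord by (rule borel_measurable_continuous_onI)
  show ?thesis unfolding w_weight_def F_comp_def by measurable
qed

lemma sets_Qstep [simp]: "sets (Qstep \<nu>) = sets borel"
proof -
  have "sigma_algebra UNIV (sets borel)" using sets.sigma_algebra_axioms[of borel] by simp
  then show ?thesis unfolding Qstep_def by (rule sigma_algebra.sets_measure_of_eq)
qed

lemma space_Qstep [simp]: "space (Qstep \<nu>) = UNIV"
  using sets_eq_imp_space_eq[OF sets_Qstep] by simp

lemma emeasure_Qstep:
  assumes sets_\<nu>: "sets \<nu> = sets borel" and A: "A \<in> sets borel"
  shows "emeasure (Qstep \<nu>) A =
    (\<integral>\<^sup>+ c. (\<Sum>\<tau>\<in>perms3. ennreal (w_weight \<tau> c) * indicator A (F_map \<tau> c)) \<partial>\<nu>)"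
proof -
  note [measurable_cong] = sets_\<nu>
  \<comment> \<open>\<open>measure_of\<close> returns the zero measure unless its argument is countably additive.\<close>
  define \<mu> where "\<mu> A = (\<integral>\<^sup>+ c. (\<Sum>\<tau>\<in>perms3. ennreal (w_weight \<tau> c) * indicator A (F_map \<tau> c)) \<partial>\<nu>)"
    for A
  have "countably_additive (sets borel) \<mu>"
  proof (rule countably_additiveI)
    fix B :: "nat \<Rightarrow> (real \<times> real) set"
    assume B: "range B \<subseteq> sets borel" "disjoint_family B"
    then have [measurable]: "B i \<in> sets borel" for i by auto
    have "(\<Sum>i. \<mu> (B i)) =
        (\<integral>\<^sup>+ c. (\<Sum>i. \<Sum>\<tau>\<in>perms3. ennreal (w_weight \<tau> c) * indicator (B i) (F_map \<tau> c)) \<partial>\<nu>)"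
      unfolding \<mu>_def by (intro nn_integral_suminf[symmetric]) measurable
    also have "\<dots> = \<mu> (\<Union> (range B))"
      unfolding \<mu>_def
    proof (intro nn_integral_cong)
      fix c
      have "(\<Sum>i. \<Sum>\<tau>\<in>perms3. ennreal (w_weight \<tau> c) * indicator (B i) (F_map \<tau> c)) =
          (\<Sum>\<tau>\<in>perms3. \<Sum>i. ennreal (w_weight \<tau> c) * indicator (B i) (F_map \<tau> c))"
        by (rule suminf_sum) simp
      then show "(\<Sum>i. \<Sum>\<tau>\<in>perms3. ennreal (w_weight \<tau> c) * indicator (B i) (F_map \<tau> c)) =
          (\<Sum>\<tau>\<in>perms3. ennreal (w_weight \<tau> c) * indicator (\<Union> (range B)) (F_map \<tau> c))"
        by (simp add: suminf_indicator[OF B(2)])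
    qed
    finally show "(\<Sum>i. \<mu> (B i)) = \<mu> (\<Union> (range B))" .
  qed
  moreover have "positive (sets borel) \<mu>" unfolding positive_def \<mu>_def by simp
  ultimately show ?thesis
    unfolding Qstep_def \<mu>_def[symmetric]
    using A sets.sigma_algebra_axioms[of borel] by (intro emeasure_measure_of_sigma) simp_all
qed

lemma AE_Qstep_Theta:
  assumes sets_\<nu>: "sets \<nu> = sets borel" and AE: "AE c in \<nu>. c \<in> Theta n"
  shows "AE c in Qstep \<nu>. c \<in> Theta (Suc n)"
proof (rule AE_I')
  have closed: "UNIV - Theta (Suc n) \<in> sets borel"
    by (intro borel_open open_Diff compact_imp_closed compact_Theta) simp
  have "emeasure (Qstep \<nu>) (UNIV - Theta (Suc n)) = (\<integral>\<^sup>+ c. 0 \<partial>\<nu>)"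
    unfolding emeasure_Qstep[OF sets_\<nu> closed]
  proof (rule nn_integral_cong_AE)
    show "AE c in \<nu>. (\<Sum>\<tau>\<in>perms3. ennreal (w_weight \<tau> c) * indicator (UNIV - Theta (Suc n)) (F_map \<tau> c)) = 0"
      using AE
    proof eventually_elim
      case (elim c)
      then have "F_map \<tau> c \<in> Theta (Suc n)" if "\<tau> \<in> perms3" for \<tau> using that by auto
      then show ?case by (intro sum.neutral ballI) simp
    qed
  qed
  then show "UNIV - Theta (Suc n) \<in> null_sets (Qstep \<nu>)"
    using closed by (simp add: null_sets_def)
qed auto

lemma emeasure_Qstep_UNIV:
  assumes sets_\<nu>: "sets \<nu> = sets borel" and AE: "AE c in \<nu>. c \<in> square28"
  shows "emeasure (Qstep \<nu>) UNIV = emeasure \<nu> UNIV"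
proof -
  have "emeasure (Qstep \<nu>) UNIV =
      (\<integral>\<^sup>+ c. (\<Sum>\<tau>\<in>perms3. ennreal (w_weight \<tau> c) * indicator UNIV (F_map \<tau> c)) \<partial>\<nu>)"
    by (rule emeasure_Qstep[OF sets_\<nu>]) simp
  also have "\<dots> = (\<integral>\<^sup>+ c. 1 \<partial>\<nu>)"
  proof (rule nn_integral_cong_AE)
    show "AE c in \<nu>. (\<Sum>\<tau>\<in>perms3. ennreal (w_weight \<tau> c) * indicator UNIV (F_map \<tau> c)) = 1"
      using AE
    proof eventually_elim
      case (elim c)
      then have "0 < fst c" "0 < snd c" by (auto simp: mem_Times_iff)
      moreover have "0 \<le> w_weight \<tau> c" if "\<tau> \<in> perms3" for \<tau>
        using w_weight_ge[OF that elim] by linarith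
      ultimately show ?case by (simp add: sum_ennreal sum_w_weight)
    qed
  qed
  finally show ?thesis using sets_eq_imp_space_eq[OF sets_\<nu>] by simp
qed

lemma emeasure_Qstep_F_map_image_ge:
  assumes sets_\<nu>: "sets \<nu> = sets borel" and AE: "AE c in \<nu>. c \<in> square28"
    and \<tau>: "\<tau> \<in> perms3" and A: "A \<in> sets borel" "F_map \<tau> ` A \<in> sets borel"
  shows "ennreal (1/64) * emeasure \<nu> A \<le> emeasure (Qstep \<nu>) (F_map \<tau> ` A)"
proof -
  have "ennreal (1/64) * emeasure \<nu> A = (\<integral>\<^sup>+ c. ennreal (1/64) * indicator A c \<partial>\<nu>)"
    using A sets_\<nu> by (simp add: nn_integral_cmult_indicator)
  also have "\<dots> \<le> (\<integral>\<^sup>+ c. (\<Sum>\<sigma>\<in>perms3. ennreal (w_weight \<sigma> c) * indicator (F_map \<tau> ` A) (F_map \<sigma> c)) \<partial>\<nu>)"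
    using AE
  proof (rule nn_integral_mono_AE[OF AE_mp], intro AE_I2 impI)
    fix c assume c: "c \<in> square28"
    have "ennreal (1/64) * indicator A c \<le> ennreal (w_weight \<tau> c) * indicator (F_map \<tau> ` A) (F_map \<tau> c)"
      using w_weight_ge[OF \<tau> c] by (auto simp: indicator_def intro: ennreal_leI)
    also have "\<dots> \<le> (\<Sum>\<sigma>\<in>perms3. ennreal (w_weight \<sigma> c) * indicator (F_map \<tau> ` A) (F_map \<sigma> c))"
      by (rule member_le_sum[OF \<tau> _ finite_perms3]) simp
    finally show "ennreal (1/64) * indicator A c \<le> \<dots>" .
  qed
  also have "\<dots> = emeasure (Qstep \<nu>) (F_map \<tau> ` A)"
    by (rule emeasure_Qstep[OF sets_\<nu> A(2), symmetric])
  finally show ?thesis .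
qed

definition tent :: "'a::metric_space \<Rightarrow> real \<Rightarrow> 'a \<Rightarrow> real" where
  "tent x r z = max 0 (1 - dist z x / r)"

lemma tent_nonneg: "0 \<le> tent x r z"
  by (simp add: tent_def)

lemma tent_le_1: "0 < r \<Longrightarrow> tent x r z \<le> 1"
  by (simp add: tent_def)

lemma tent_eq_0_iff: "0 < r \<Longrightarrow> tent x r z = 0 \<longleftrightarrow> z \<notin> ball x r"
  by (auto simp: tent_def dist_commute max_def field_simps)

lemma tent_ge_half: "0 < r \<Longrightarrow> z \<in> cball x (r/2) \<Longrightarrow> 1/2 \<le> tent x r z"
  by (auto simp: tent_def dist_commute max_def field_simps)

lemma continuous_on_tent: "continuous_on UNIV (tent x r)"
  unfolding tent_def by (cases "r = 0") (simp_all add: continuous_intros)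

lemma tent_measurable [measurable]: "tent x r \<in> borel_measurable borel"
  using continuous_on_tent by (rule borel_measurable_continuous_onI)

lemma integrable_tent:
  fixes \<mu> :: "'a::metric_space measure"
  assumes "finite_measure \<mu>" "sets \<mu> = sets borel" "0 < r"
  shows "integrable \<mu> (tent x r)"
proof (rule finite_measure.integrable_const_bound[where B=1])
  show "AE z in \<mu>. norm (tent x r z) \<le> 1"
    by (intro AE_I2) (simp add: abs_of_nonneg tent_nonneg tent_le_1[OF assms(3)])
  show "tent x r \<in> borel_measurable \<mu>"
    by (simp add: measurable_cong_sets[OF assms(2) refl])
qed (rule assms(1))

lemma integral_tent_eq_0_iff:
  fixes \<mu> :: "'a::metric_space measure"
  assumes "finite_measure \<mu>" "sets \<mu> = sets borel" "0 < r"
  shows "(\<integral>z. tent x r z \<partial>\<mu>) = 0 \<longleftrightarrow> emeasure \<mu> (ball x r) = 0"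
proof -
  have "(\<integral>z. tent x r z \<partial>\<mu>) = 0 \<longleftrightarrow> (AE z in \<mu>. tent x r z = 0)"
    by (intro integral_nonneg_eq_0_iff_AE AE_I2 tent_nonneg integrable_tent[OF assms])
  also have "\<dots> \<longleftrightarrow> (AE z in \<mu>. z \<notin> ball x r)"
    by (simp add: tent_eq_0_iff[OF assms(3)])
  also have "\<dots> \<longleftrightarrow> emeasure \<mu> (ball x r) = 0"
    using assms(2) AE_iff_null_sets[of "ball x r" \<mu>] by (simp add: null_sets_def)
  finally show ?thesis .
qed

lemma weak_conv2_integral_tent:
  assumes "weak_conv2 \<mu>s \<mu>" "0 < r"
  shows "(\<lambda>n. \<integral>z. tent x r z \<partial>\<mu>s n) \<longlonglongrightarrow> (\<integral>z. tent x r z \<partial>\<mu>)"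
proof -
  have "\<bar>tent x r z\<bar> \<le> 1" for z
    using tent_nonneg[of x r z] tent_le_1[OF \<open>0 < r\<close>, of x z] by simp
  then have "bounded (range (tent x r))"
    unfolding bounded_iff by (intro exI[of _ 1]) auto
  then show ?thesis using assms(1) continuous_on_tent unfolding weak_conv2_def by blast
qed

lemma weak_conv2_ball_pos:
  assumes conv: "weak_conv2 \<mu>s \<mu>"
    and \<mu>s: "\<And>n. prob_space (\<mu>s n)" "\<And>n. sets (\<mu>s n) = sets borel"
    and \<mu>: "prob_space \<mu>" "sets \<mu> = sets borel"
    and "0 < r" "0 < \<delta>"
    and ev: "eventually (\<lambda>n. \<delta> \<le> measure (\<mu>s n) (cball x (r/2))) sequentially"
  shows "0 < emeasure \<mu> (ball x r)"
proof -
  have "eventually (\<lambda>n. \<delta> / 2 \<le> \<integral>z. tent x r z \<partial>\<mu>s n) sequentially"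
    using ev
  proof eventually_elim
    case (elim n)
    interpret P: prob_space "\<mu>s n" by (rule \<mu>s(1))
    have "measure (\<mu>s n) (cball x (r/2)) = (\<integral>z. indicator (cball x (r/2)) z \<partial>\<mu>s n)"
      using sets_eq_imp_space_eq[OF \<mu>s(2)] by simp
    also have "\<dots> \<le> (\<integral>z. 2 * tent x r z \<partial>\<mu>s n)"
    proof (rule integral_mono)
      show "integrable (\<mu>s n) (indicator (cball x (r/2)) :: _ \<Rightarrow> real)"
        by (rule integrable_real_indicator) (simp_all add: \<mu>s(2) P.emeasure_finite less_top[symmetric])
      show "integrable (\<mu>s n) (\<lambda>z. 2 * tent x r z)"
        using integrable_tent[OF P.finite_measure_axioms \<mu>s(2) \<open>0 < r\<close>] by simp
      show "indicator (cball x (r/2)) z \<le> 2 * tent x r z" for z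
        using tent_ge_half[OF \<open>0 < r\<close>, of z x] tent_nonneg[of x r z]
        by (auto simp: indicator_def)
    qed
    finally show ?case using elim by simp
  qed
  then have "\<delta> / 2 \<le> (\<integral>z. tent x r z \<partial>\<mu>)"
    by (rule tendsto_lowerbound[OF weak_conv2_integral_tent[OF conv \<open>0 < r\<close>]])
       (simp_all add: trivial_limit_sequentially)
  then have "(\<integral>z. tent x r z \<partial>\<mu>) \<noteq> 0" using \<open>0 < \<delta>\<close> by linarith
  then show ?thesis
    using integral_tent_eq_0_iff[OF prob_space.finite_measure[OF \<mu>(1)] \<mu>(2) \<open>0 < r\<close>]
    by (simp add: zero_less_iff_neq_zero)
qed

lemma weak_conv2_ball_null:
  assumes conv: "weak_conv2 \<mu>s \<mu>"
    and \<mu>s: "\<And>n. prob_space (\<mu>s n)" "\<And>n. sets (\<mu>s n) = sets borel"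
    and \<mu>: "prob_space \<mu>" "sets \<mu> = sets borel"
    and "0 < r"
    and ev: "eventually (\<lambda>n. emeasure (\<mu>s n) (ball x r) = 0) sequentially"
  shows "emeasure \<mu> (ball x r) = 0"
proof -
  have "eventually (\<lambda>n. (\<integral>z. tent x r z \<partial>\<mu>s n) = 0) sequentially"
    using ev by eventually_elim
      (simp add: integral_tent_eq_0_iff[OF prob_space.finite_measure[OF \<mu>s(1)] \<mu>s(2) \<open>0 < r\<close>])
  then have "(\<integral>z. tent x r z \<partial>\<mu>) = 0"
    by (rule LIMSEQ_unique[OF weak_conv2_integral_tent[OF conv \<open>0 < r\<close>] tendsto_eventually])
  then show ?thesis
    using integral_tent_eq_0_iff[OF prob_space.finite_measure[OF \<mu>(1)] \<mu>(2) \<open>0 < r\<close>] by simp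
qed

lemma word_image_borel: "foldr F_map w ` square28 \<in> sets borel"
  by (intro borel_closed compact_imp_closed compact_continuous_image
      continuous_on_subset[OF continuous_on_foldr_F_map] compact_Times compact_Icc) simp

context
  fixes \<nu>0 :: "(real \<times> real) measure"
  assumes sets_\<nu>0: "sets \<nu>0 = sets borel"
    and prob_\<nu>0: "prob_space \<nu>0"
    and AE_\<nu>0: "AE c in \<nu>0. c \<in> square28"
begin

lemma sets_Qstep_iter [simp]: "sets ((Qstep ^^ n) \<nu>0) = sets borel"
  using sets_\<nu>0 by (cases n) simp_all

lemma AE_Qstep_iter_Theta: "AE c in (Qstep ^^ n) \<nu>0. c \<in> Theta n"
proof (induction n)
  case 0
  show ?case using AE_\<nu>0 by (simp only: funpow_0 Theta.simps)
next
  case (Suc n)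
  show ?case using AE_Qstep_Theta[OF sets_Qstep_iter Suc.IH] by (simp only: funpow.simps o_apply)
qed

lemma AE_Qstep_iter_square28: "AE c in (Qstep ^^ n) \<nu>0. c \<in> square28"
  using AE_Qstep_iter_Theta by eventually_elim (use Theta_subset_square28 in blast)

lemma prob_space_Qstep_iter: "prob_space ((Qstep ^^ n) \<nu>0)"
proof (induction n)
  case 0
  show ?case using prob_\<nu>0 by simp
next
  case (Suc n)
  have "emeasure ((Qstep ^^ Suc n) \<nu>0) UNIV = emeasure ((Qstep ^^ n) \<nu>0) UNIV"
    using emeasure_Qstep_UNIV[OF sets_Qstep_iter AE_Qstep_iter_square28] by simp
  also have "\<dots> = 1"
    using prob_space.emeasure_space_1[OF Suc.IH] sets_eq_imp_space_eq[OF sets_Qstep_iter[of n]] by simp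
  finally show ?case by (intro prob_spaceI) simp
qed

lemma emeasure_Qstep_iter_word_image_ge:
  "set w \<subseteq> perms3 \<Longrightarrow> length w \<le> n \<Longrightarrow>
    ennreal ((1/64) ^ length w) \<le> emeasure ((Qstep ^^ n) \<nu>0) (foldr F_map w ` square28)"
proof (induction w arbitrary: n)
  case Nil
  have "emeasure ((Qstep ^^ n) \<nu>0) square28 = 1"
    using word_image_borel[of "[]"]
    by (intro prob_space.emeasure_eq_1_AE prob_space_Qstep_iter AE_Qstep_iter_square28) simp_all
  then show ?case by simp
next
  case (Cons \<tau> w)
  then obtain m where n: "n = Suc m" and m: "length w \<le> m" by (cases n) auto
  have \<tau>: "\<tau> \<in> perms3" and w: "set w \<subseteq> perms3" using Cons.prems by auto
  have "ennreal ((1/64) ^ length (\<tau> # w)) = ennreal (1/64) * ennreal ((1/64) ^ length w)"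
    by (simp add: ennreal_mult[symmetric])
  also have "\<dots> \<le> ennreal (1/64) * emeasure ((Qstep ^^ m) \<nu>0) (foldr F_map w ` square28)"
    by (rule mult_left_mono[OF Cons.IH[OF w m]]) simp
  also have "\<dots> \<le> emeasure (Qstep ((Qstep ^^ m) \<nu>0)) (F_map \<tau> ` foldr F_map w ` square28)"
    using word_image_borel[of w] word_image_borel[of "\<tau> # w"]
    by (intro emeasure_Qstep_F_map_image_ge sets_Qstep_iter AE_Qstep_iter_square28 \<tau>)
       (simp_all add: image_comp)
  also have "\<dots> = emeasure ((Qstep ^^ n) \<nu>0) (foldr F_map (\<tau> # w) ` square28)"
    by (simp add: n image_comp)
  finally show ?case .
qed

lemma Theta2_subset_msupport:
  assumes \<nu>2: "prob_space \<nu>2" "sets \<nu>2 = sets borel"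
    and conv: "weak_conv2 (\<lambda>n. (Qstep ^^ n) \<nu>0) \<nu>2"
  shows "Theta2 \<subseteq> msupport \<nu>2"
proof
  fix x assume x: "x \<in> Theta2"
  show "x \<in> msupport \<nu>2" unfolding msupport_def
  proof (intro CollectI allI impI, elim conjE)
    fix U assume "open U" "x \<in> U"
    then obtain e where "0 < e" "ball x e \<subseteq> U" by (meson open_contains_ball)
    obtain w where w: "set w \<subseteq> perms3" "foldr F_map w ` square28 \<subseteq> cball x (e/2)"
      using Theta2_near_word_image[OF x] \<open>0 < e\<close> by (metis half_gt_zero)
    have "eventually (\<lambda>n. (1/64) ^ length w \<le> measure ((Qstep ^^ n) \<nu>0) (cball x (e/2))) sequentially"
      using eventually_ge_at_top[of "length w"]
    proof eventually_elim
      case (elim n)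
      interpret P: prob_space "(Qstep ^^ n) \<nu>0" by (rule prob_space_Qstep_iter)
      have "emeasure ((Qstep ^^ n) \<nu>0) (foldr F_map w ` square28) \<le> emeasure ((Qstep ^^ n) \<nu>0) (cball x (e/2))"
        using w(2) by (intro emeasure_mono) simp_all
      then have "ennreal ((1/64) ^ length w) \<le> emeasure ((Qstep ^^ n) \<nu>0) (cball x (e/2))"
        using emeasure_Qstep_iter_word_image_ge[OF w(1) elim] by (rule order_trans[rotated])
      then show ?case by (simp add: P.emeasure_eq_measure)
    qed
    then have "0 < emeasure \<nu>2 (ball x e)"
      using \<open>0 < e\<close> by (intro weak_conv2_ball_pos[OF conv prob_space_Qstep_iter sets_Qstep_iter \<nu>2]) simp_all
    also have "\<dots> \<le> emeasure \<nu>2 U"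
      using \<nu>2(2) \<open>ball x e \<subseteq> U\<close> \<open>open U\<close> by (intro emeasure_mono) simp_all
    finally show "0 < emeasure \<nu>2 U" .
  qed
qed

lemma msupport_subset_Theta2:
  assumes \<nu>2: "prob_space \<nu>2" "sets \<nu>2 = sets borel"
    and conv: "weak_conv2 (\<lambda>n. (Qstep ^^ n) \<nu>0) \<nu>2"
  shows "msupport \<nu>2 \<subseteq> Theta2"
proof
  fix x assume x: "x \<in> msupport \<nu>2"
  show "x \<in> Theta2" unfolding Theta2_def
  proof (rule ccontr)
    assume "x \<notin> (\<Inter>n. Theta n)"
    then obtain m where "x \<notin> Theta m" by auto
    moreover have "open (- Theta m)" using compact_Theta by (simp add: compact_imp_closed open_Compl)
    ultimately obtain r where "0 < r" and r: "ball x r \<subseteq> - Theta m"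
      by (meson ComplI open_contains_ball)
    have "eventually (\<lambda>n. emeasure ((Qstep ^^ n) \<nu>0) (ball x r) = 0) sequentially"
      using eventually_ge_at_top[of m]
    proof eventually_elim
      case (elim n)
      have "AE z in (Qstep ^^ n) \<nu>0. z \<notin> ball x r"
        using AE_Qstep_iter_Theta[of n] by eventually_elim (use r Theta_antimono[OF elim] in blast)
      then show ?case using AE_iff_null_sets[of "ball x r" "(Qstep ^^ n) \<nu>0"] by (simp add: null_sets_def)
    qed
    then have "emeasure \<nu>2 (ball x r) = 0"
      using \<open>0 < r\<close> by (intro weak_conv2_ball_null[OF conv prob_space_Qstep_iter sets_Qstep_iter \<nu>2])
    moreover have "0 < emeasure \<nu>2 (ball x r)"
      using x \<open>0 < r\<close> by (simp add: msupport_def)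
    ultimately show False by simp
  qed
qed

end

theorem lemma2:
  fixes \<nu>2 :: "(real \<times> real) measure"
  assumes "prob_space \<nu>2" and "sets \<nu>2 = sets borel"
    and "\<And>\<nu>0. prob_space \<nu>0 \<Longrightarrow> sets \<nu>0 = sets borel \<Longrightarrow>
           emeasure \<nu>0 (UNIV - {2..8} \<times> {2..8}) = 0 \<Longrightarrow>
           weak_conv2 (\<lambda>n. (Qstep ^^ n) \<nu>0) \<nu>2"
  shows "Theta2 = msupport \<nu>2"
proof -
  define \<delta> :: "(real \<times> real) measure" where "\<delta> = return borel (2, 2)"
  have sets_\<delta>: "sets \<delta> = sets borel" and prob_\<delta>: "prob_space \<delta>"
    by (simp_all add: \<delta>_def prob_space_return)
  have AE_\<delta>: "AE c in \<delta>. c \<in> square28"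
    unfolding \<delta>_def by (subst AE_return) (simp_all add: pred_sets2[OF borel_closed] closed_Times)
  have "UNIV - square28 \<in> sets \<delta>"
    using sets_\<delta> by (simp add: borel_open open_Diff closed_Times)
  then have "emeasure \<delta> (UNIV - square28) = 0"
    using AE_\<delta> AE_iff_null_sets[of "UNIV - square28" \<delta>] by (simp add: null_sets_def)
  then have conv: "weak_conv2 (\<lambda>n. (Qstep ^^ n) \<delta>) \<nu>2"
    using assms(3)[OF prob_\<delta> sets_\<delta>] by simp
  show ?thesis
    using Theta2_subset_msupport[OF sets_\<delta> prob_\<delta> AE_\<delta> assms(1,2) conv]
      msupport_subset_Theta2[OF sets_\<delta> prob_\<delta> AE_\<delta> assms(1,2) conv] by (rule antisym)
qed

end
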